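(* Let $\gamma$ be Euler's constant, and define $a_1=1/2$ and, for $j\ge2$, $a_j=\dfrac{\nu(j-1)}{2j(2j-1)(2j-2)}$. Then for every integer $N\ge2$, $$\gamma-\sum_{j=1}^N a_j<\frac{2+\nu(N-1)+1/(N-1)}{16(N-1)^2}.$$
   Context: $\gamma=\lim_{n\to\infty}\left(-\ln n+\sum_{i=1}^n 1/i\right)$ is Euler's constant. For a positive integer $t$, $\nu(t)$ denotes the number of digits in the binary expansion of $t$, i.e. $\nu(t)=\lfloor\log_2 t\rfloor+1$. *)

theory Defs
  imports "HOL-Analysis.Analysis"
begin

text \<open>Number of binary digits of a positive integer t: nu t = floor(log2 t) + 1.\<close>
definition nu :: "nat \<Rightarrow> int" where
  "nu t = \<lfloor>log 2 (real t)\<rfloor> + 1"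

definition a_seq :: "nat \<Rightarrow> real" where
  "a_seq j = (if j = 1 then 1/2
              else of_int (nu (j - 1)) / (2 * real j * (2 * real j - 1) * (2 * real j - 2)))"

end

theory Submission
  imports Defs "HOL-Real_Asymp.Real_Asymp"
begin

text \<open>
  Put \<open>e n = H(2n) - H(n) + 1/(4n) - ln 2\<close>. Then \<open>e n - e (n+1) = 1/(4n(n+1)(2n+1))\<close>, which
  is exactly the denominator in \<open>a (n+1)\<close>, so \<open>a (n+1) = \<nu>(n) (e n - e (n+1))\<close>. As \<open>\<nu>\<close> is constant on the
  dyadic blocks \<open>[2^i, 2^(i+1))\<close>, summation by parts gives, for \<open>2^k \<le> m < 2^(k+1)\<close>,
  \<open>a 1 + ... + a (m+1) = 1/2 + e (2^0) + e (2^1) + ... + e (2^k) - (k+1) e (m+1)\<close>, while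
  \<open>\<Sum>\<^sub>i e (2^i) = \<gamma> - 1/2\<close> because \<open>H(2^K) - K ln 2 \<longrightarrow> \<gamma>\<close>. Hence the error is the tail
  \<open>\<Sum>\<^bsub>i>k\<^esub> e (2^i)\<close> plus \<open>(k+1) e (m+1)\<close>, and both are controlled by \<open>e n < 1/(16n^2)\<close>,
  which holds because \<open>1/(16n^2) - e n\<close> decreases strictly to 0.
\<close>

definition double_harm_defect :: "nat \<Rightarrow> real" where
  "double_harm_defect n = harm (2 * n) - harm n + 1 / (4 * real n) - ln 2"

lemma double_harm_defect_diff:
  assumes "n \<ge> 1"
  shows "double_harm_defect n - double_harm_defect (Suc n)
           = 1 / (4 * real n * (real n + 1) * (2 * real n + 1))"
proof -
  have "harm (2 * Suc n) = harm (2 * n) + 1 / (2 * real n + 1) + 1 / (2 * real n + 2)"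
    and "harm (Suc n) = harm n + 1 / (real n + 1)"
    by (simp_all add: harm_Suc field_simps)
  then have "double_harm_defect n - double_harm_defect (Suc n)
               = 1 / (real n + 1) - 1 / (2 * real n + 1) - 1 / (2 * real n + 2)
                 + 1 / (4 * real n) - 1 / (4 * (real n + 1))"
    unfolding double_harm_defect_def by simp
  also have "\<dots> = 1 / (4 * real n * (real n + 1) * (2 * real n + 1))"
    using assms by (simp add: divide_simps) algebra
  finally show ?thesis .
qed

lemma double_harm_defect_LIMSEQ: "double_harm_defect \<longlonglongrightarrow> 0"
proof -
  have "strict_mono (\<lambda>n::nat. 2 * n)"
    by (auto intro: strict_monoI)
  from LIMSEQ_subseq_LIMSEQ[OF euler_mascheroni_LIMSEQ this]
  have "(\<lambda>n. harm (2 * n) - ln (real (2 * n))) \<longlonglongrightarrow> euler_mascheroni"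
    by (simp add: o_def)
  moreover have "(\<lambda>n. 1 / (4 * real n)) \<longlonglongrightarrow> 0"
    by real_asymp
  ultimately have "(\<lambda>n. (harm (2 * n) - ln (real (2 * n))) - (harm n - ln (real n)) + 1 / (4 * real n))
                     \<longlonglongrightarrow> euler_mascheroni - euler_mascheroni + 0"
    by (intro tendsto_intros euler_mascheroni_LIMSEQ)
  moreover have "\<forall>\<^sub>F n in sequentially. (harm (2 * n) - ln (real (2 * n))) - (harm n - ln (real n))
                     + 1 / (4 * real n) = double_harm_defect n"
    using eventually_gt_at_top[of 0]
    by eventually_elim (simp add: double_harm_defect_def ln_mult)
  ultimately show ?thesis
    by (simp add: Lim_transform_eventually)
qed

lemma strictly_decreasing_above_limit:
  fixes u :: "nat \<Rightarrow> 'a::linorder_topology"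
  assumes decreasing: "\<And>n. n \<ge> n\<^sub>0 \<Longrightarrow> u (Suc n) < u n" and "u \<longlonglongrightarrow> L" and "n \<ge> n\<^sub>0"
  shows "L < u n"
proof -
  have "decseq (\<lambda>k. u (k + Suc n))"
    using decreasing \<open>n \<ge> n\<^sub>0\<close> by (intro decseq_SucI less_imp_le) simp
  from decseq_ge[OF this LIMSEQ_ignore_initial_segment[OF \<open>u \<longlonglongrightarrow> L\<close>], of 0]
  have "L \<le> u (Suc n)"
    by simp
  also have "\<dots> < u n"
    using decreasing \<open>n \<ge> n\<^sub>0\<close> .
  finally show ?thesis .
qed

lemma double_harm_defect_less:
  assumes "n \<ge> 1"
  shows "double_harm_defect n < 1 / (16 * real n ^ 2)"
proof -
  define u where "u n = 1 / (16 * real n ^ 2) - double_harm_defect n" for n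
  have "u (Suc n) < u n" if "n \<ge> 1" for n
  proof -
    have "u n - u (Suc n) = 1 / (16 * real n ^ 2) - 1 / (16 * (real n + 1) ^ 2)
                              - 1 / (4 * real n * (real n + 1) * (2 * real n + 1))"
      using double_harm_defect_diff[OF that] unfolding u_def by (simp add: algebra_simps)
    also have "\<dots> = 1 / (16 * real n ^ 2 * (real n + 1) ^ 2 * (2 * real n + 1))"
      using that by (simp add: divide_simps) algebra
    also have "\<dots> > 0"
      using that by simp
    finally show ?thesis
      by simp
  qed
  moreover have "(\<lambda>n. 1 / (16 * real n ^ 2)) \<longlonglongrightarrow> 0"
    by real_asymp
  then have "u \<longlonglongrightarrow> 0"
    unfolding u_def using tendsto_diff[OF _ double_harm_defect_LIMSEQ] by fastforce
  ultimately have "0 < u n"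
    using strictly_decreasing_above_limit assms by blast
  then show ?thesis
    unfolding u_def by simp
qed

lemma power2_two_power: "((2::'a::comm_semiring_1) ^ n) ^ 2 = 4 ^ n"
  by (induction n) (simp_all add: power2_eq_square algebra_simps)

lemma sum_double_harm_defect_pow2:
  "(\<Sum>i<K. double_harm_defect (2 ^ i)) = harm (2 ^ K) - real K * ln 2 - 1 / 2 - 1 / 2 ^ (K + 1)"
proof (induction K)
  case 0
  then show ?case
    by (simp add: harm_def)
next
  case (Suc K)
  have "2 * 2 ^ K = (2::nat) ^ Suc K"
    by simp
  with Suc show ?case
    by (simp add: double_harm_defect_def algebra_simps)
qed

lemma double_harm_defect_pow2_sums:
  "(\<lambda>i. double_harm_defect (2 ^ i)) sums (euler_mascheroni - 1 / 2)"
proof -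
  have "strict_mono (\<lambda>K::nat. (2::nat) ^ K)"
    by (auto intro: strict_monoI)
  from LIMSEQ_subseq_LIMSEQ[OF euler_mascheroni_LIMSEQ this]
  have "(\<lambda>K. harm (2 ^ K) - real K * ln 2) \<longlonglongrightarrow> euler_mascheroni"
    by (simp add: o_def ln_realpow)
  moreover have "(\<lambda>K::nat. 1 / (2::real) ^ (K + 1)) \<longlonglongrightarrow> 0"
    by real_asymp
  ultimately have "(\<lambda>K. harm (2 ^ K) - real K * ln 2 - 1 / 2 - 1 / 2 ^ (K + 1))
                     \<longlonglongrightarrow> euler_mascheroni - 1 / 2 - 0"
    by (intro tendsto_intros)
  then show ?thesis
    unfolding sums_def sum_double_harm_defect_pow2 by simp
qed

lemma euler_mascheroni_minus_sum_double_harm_defect_le: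
  "euler_mascheroni - 1 / 2 - (\<Sum>i<L. double_harm_defect (2 ^ i)) \<le> 1 / (12 * 4 ^ L)"
proof -
  have tail: "(\<lambda>i. double_harm_defect (2 ^ (i + L)))
                sums (euler_mascheroni - 1 / 2 - (\<Sum>i<L. double_harm_defect (2 ^ i)))"
    using sums_split_initial_segment[OF double_harm_defect_pow2_sums, of L] by simp
  have geometric: "(\<lambda>i. 1 / (16 * 4 ^ L) * (1 / 4 :: real) ^ i) sums (1 / (16 * 4 ^ L) * (1 / (1 - 1 / 4)))"
    by (intro sums_mult geometric_sums) simp
  have "double_harm_defect (2 ^ (i + L)) \<le> 1 / (16 * 4 ^ L) * (1 / 4) ^ i" for i
  proof -
    have "double_harm_defect (2 ^ (i + L)) < 1 / (16 * real (2 ^ (i + L)) ^ 2)"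
      by (intro double_harm_defect_less) simp
    also have "\<dots> = 1 / (16 * 4 ^ L) * (1 / 4) ^ i"
      by (simp add: power_add power_mult_distrib power2_two_power power_divide)
    finally show ?thesis
      by simp
  qed
  from sums_le[OF this tail geometric] show ?thesis
    by simp
qed

lemma nu_eq:
  assumes "2 ^ k \<le> m" "m < 2 ^ (k + 1)"
  shows "nu m = int k + 1"
  using floor_log_nat_eq_if[of 2 k m] assms unfolding nu_def by simp

lemma a_seq_Suc:
  assumes "m \<ge> 1"
  shows "a_seq (Suc m) = of_int (nu m) * (double_harm_defect m - double_harm_defect (Suc m))"
proof -
  have "2 * real (Suc m) * (2 * real (Suc m) - 1) * (2 * real (Suc m) - 2)
          = 4 * real m * (real m + 1) * (2 * real m + 1)"
    by (simp add: algebra_simps)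
  then show ?thesis
    using assms unfolding a_seq_def double_harm_defect_diff[OF assms] by simp
qed

lemma sum_a_seq_eq:
  assumes "2 ^ k \<le> m" "m < 2 ^ (k + 1)"
  shows "(\<Sum>j=1..Suc m. a_seq j)
           = 1 / 2 + (\<Sum>i\<le>k. double_harm_defect (2 ^ i)) - (real k + 1) * double_harm_defect (Suc m)"
proof -
  have "1 \<le> m"
    using assms(1) one_le_power[of "2::nat" k] by linarith
  then show ?thesis
    using assms
  proof (induction m arbitrary: k rule: nat_induct_at_least)
    case base
    then have "k = 0"
      using power_increasing_iff[of "2::nat" k 0] by simp
    moreover have "a_seq 1 = 1 / 2"
      by (simp add: a_seq_def)
    moreover have "a_seq 2 = double_harm_defect 1 - double_harm_defect 2"
      using a_seq_Suc[of 1] nu_eq[of 0 1] by (simp add: numeral_2_eq_2)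
    ultimately show ?case
      by (simp add: numeral_2_eq_2)
  next
    case (Suc m)
    have a_seq: "a_seq (Suc (Suc m))
                   = (real k + 1) * (double_harm_defect (Suc m) - double_harm_defect (Suc (Suc m)))"
      using a_seq_Suc[of "Suc m"] nu_eq[OF Suc.prems] by simp
    show ?case
    proof (cases "Suc m = 2 ^ k")
      case True
      then obtain k' where "k = Suc k'"
        using Suc.hyps by (cases k) auto
      with True have "(\<Sum>j=1..Suc m. a_seq j) = 1 / 2 + (\<Sum>i<k. double_harm_defect (2 ^ i))
                                                   - real k * double_harm_defect (Suc m)"
        using Suc.IH[of k'] by (simp add: lessThan_Suc_atMost)
      with True a_seq show ?thesis
        by (simp add: lessThan_Suc_atMost[symmetric] algebra_simps)
    next
      case False
      with Suc.prems Suc.IH[of k] a_seq show ?thesis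
        by (simp add: algebra_simps)
    qed
  qed
qed

lemma euler_mascheroni_minus_sum_a_seq_less:
  assumes "2 ^ k \<le> m" "m < 2 ^ (k + 1)"
  shows "euler_mascheroni - (\<Sum>j=1..Suc m. a_seq j) < (4 / 3 + (real k + 1)) / (16 * real (Suc m) ^ 2)"
proof -
  have "Suc m \<le> 2 ^ (k + 1)"
    using assms(2) by simp
  then have "real (Suc m) \<le> 2 ^ (k + 1)"
    by (metis of_nat_le_iff of_nat_numeral of_nat_power)
  then have "real (Suc m) ^ 2 \<le> (2 ^ (k + 1)) ^ 2"
    by (intro power_mono) simp_all
  also have "\<dots> = 4 ^ (k + 1)"
    by (rule power2_two_power)
  finally have tail: "euler_mascheroni - 1 / 2 - (\<Sum>i\<le>k. double_harm_defect (2 ^ i))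
                        \<le> 1 / (12 * real (Suc m) ^ 2)"
    using euler_mascheroni_minus_sum_double_harm_defect_le[of "k + 1"]
    by (simp add: lessThan_Suc_atMost[symmetric] frac_le order.trans)
  have "(real k + 1) * double_harm_defect (Suc m) < (real k + 1) * (1 / (16 * real (Suc m) ^ 2))"
    by (intro mult_strict_left_mono double_harm_defect_less) simp_all
  moreover have "(4 / 3 + (real k + 1)) / (16 * real (Suc m) ^ 2)
                   = 1 / (12 * real (Suc m) ^ 2) + (real k + 1) * (1 / (16 * real (Suc m) ^ 2))"
    by (simp add: field_simps)
  ultimately show ?thesis
    using tail unfolding sum_a_seq_eq[OF assms] by linarith
qed

theorem proposition1:
  fixes N :: nat
  assumes "N \<ge> 2"
  shows "euler_mascheroni - (\<Sum>j=1..N. a_seq j)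
           < (2 + of_int (nu (N - 1)) + 1 / real (N - 1)) / (16 * (real N - 1)^2)"
proof -
  have "N - 1 \<ge> 1"
    using assms by simp
  then obtain k where k: "2 ^ k \<le> N - 1" "N - 1 < 2 ^ (k + 1)"
    using ex_power_ivl1[of 2 "N - 1"] by auto
  have N: "Suc (N - 1) = N" and "real (N - 1) = real N - 1"
    using assms by auto
  have nu: "of_int (nu (N - 1)) = real k + 1"
    using nu_eq[OF k] by simp
  have "euler_mascheroni - (\<Sum>j=1..N. a_seq j) < (4 / 3 + of_int (nu (N - 1))) / (16 * real N ^ 2)"
    using euler_mascheroni_minus_sum_a_seq_less[OF k] unfolding N nu .
  also have "\<dots> \<le> (2 + of_int (nu (N - 1)) + 1 / real (N - 1)) / (16 * (real N - 1)^2)"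
    using assms unfolding nu \<open>real (N - 1) = real N - 1\<close>
    by (intro frac_le) (simp_all add: power_mono)
  finally show ?thesis .
qed

end
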